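(* Suppose $f$ is twice differentiable at every point of $\mathbb{R}^{n\times p}$. Then for every $X\in\mathcal{S}_{n,p}$ and every $D\in\mathcal{T}_X$, $$\langle D,\nabla^2h(X)[D]\rangle=\langle D,\nabla^2f(X)[D]-D\Phi(X^\top\nabla f(X))\rangle .$$
   Context: $f:\mathbb{R}^{n\times p}\to\mathbb{R}$ is differentiable with $f,\nabla f$ locally Lipschitz. $\langle A,B\rangle=\mathrm{tr}(A^\top B)$, $\Phi(M):=\frac12(M+M^\top)$. $\mathcal{S}_{n,p}=\{X:X^\top X=I_p\}$, and for $X\in\mathcal{S}_{n,p}$ the tangent space is $\mathcal{T}_X:=\{D\in\mathbb{R}^{n\times p}:\Phi(D^\top X)=0\}$. $\mathcal{A}(X):=\frac32I_p-\frac12X^\top X$, $h(X):=f(X\mathcal{A}(X))+\frac\beta4\|X^\top X-I_p\|_F^2$ with $\beta>0$. *)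

theory Defs
  imports "HOL-Analysis.Analysis"
begin

text \<open>Matrices in R^{n x p} are modelled as real^'p^'n. The inner product
  on this type is the Frobenius inner product tr(A^T B), and norm is the Frobenius norm.\<close>

definition Phi :: "real^'m^'m \<Rightarrow> real^'m^'m" where
  "Phi M = (1/2) *\<^sub>R (M + transpose M)"

definition Amap :: "real^'p^'n \<Rightarrow> real^'p^'p" where
  "Amap X = (3/2) *\<^sub>R mat 1 - (1/2) *\<^sub>R (transpose X ** X)"

definition hfun :: "(real^'p^'n \<Rightarrow> real) \<Rightarrow> real \<Rightarrow> real^'p^'n \<Rightarrow> real" where
  "hfun f \<beta> X = f (X ** Amap X) + (\<beta> / 4) * (norm (transpose X ** X - mat 1))\<^sup>2"

definition stiefel :: "(real^'p^'n) set" where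
  "stiefel = {X. transpose X ** X = mat 1}"

definition tangent :: "real^'p^'n \<Rightarrow> (real^'p^'n) set" where
  "tangent X = {D. Phi (transpose D ** X) = 0}"

definition grad :: "(real^'p^'n \<Rightarrow> real) \<Rightarrow> real^'p^'n \<Rightarrow> real^'p^'n" where
  "grad g X = (\<chi> i j. frechet_derivative g (at X) (\<chi> k l. if k = i \<and> l = j then 1 else 0))"

definition hess :: "(real^'p^'n \<Rightarrow> real) \<Rightarrow> real^'p^'n \<Rightarrow> real^'p^'n \<Rightarrow> real^'p^'n" where
  "hess g X = frechet_derivative (grad g) (at X)"

definition loc_lipschitz :: "('a::metric_space \<Rightarrow> 'b::metric_space) \<Rightarrow> bool" where
  "loc_lipschitz g \<longleftrightarrow> (\<forall>x. \<exists>r>0. \<exists>L. L-lipschitz_on (ball x r) g)"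

end

theory Submission
  imports Defs
begin

text \<open>On the Stiefel manifold \<open>\<A>(X) = I\<close>, and for a tangent direction \<open>D\<close> the derivative
  \<open>-\<Phi>(X\<^sup>T D)\<close> of \<open>\<A>\<close> vanishes, as do the penalty \<open>X\<^sup>T X - I\<close> and its derivative.
  Differentiating the closed form of \<open>\<nabla>h\<close> at \<open>X\<close> in direction \<open>D\<close> therefore leaves
  \<open>\<nabla>\<^sup>2f(X)[D] - D \<Phi>(X\<^sup>T \<nabla>f(X)) - X \<Phi>(Q)\<close> with
  \<open>Q = X\<^sup>T \<nabla>\<^sup>2f(X)[D] + D\<^sup>T \<nabla>f(X)\<close>, and the last term is orthogonal to \<open>D\<close>
  because \<open>\<langle>D, X \<Phi>(Q)\<rangle> = \<langle>\<Phi>(X\<^sup>T D), Q\<rangle> = 0\<close>.\<close>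

lemma matrix_add_rdistrib: "((A::real^'m^'n) + B) ** C = A ** C + B ** C"
  by (vector matrix_matrix_mult_def sum.distrib[symmetric] field_simps)

lemma matrix_mult_minus_right: "(A::real^'m^'n) ** (- B) = - (A ** B)"
  by (vector matrix_matrix_mult_def sum_negf[symmetric])

lemma bounded_bilinear_matrix_mult:
  "bounded_bilinear ((**) :: real^'m^'n \<Rightarrow> real^'p^'m \<Rightarrow> real^'p^'n)"
  by (rule bilinear_conv_bounded_bilinear[THEN iffD1])
    (auto simp: bilinear_def intro!: linearI
      simp: matrix_add_ldistrib matrix_add_rdistrib matrix_scalar_ac scalar_matrix_assoc)

lemmas has_derivative_matrix_mult[derivative_intros] =
  bounded_bilinear.FDERIV[OF bounded_bilinear_matrix_mult]

lemma transpose_add: "transpose (A + B) = transpose A + transpose (B::real^'m^'n)"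
  by (simp add: transpose_def vec_eq_iff)

lemma transpose_diff: "transpose (A - B) = transpose A - transpose (B::real^'m^'n)"
  by (simp add: transpose_def vec_eq_iff)

lemma bounded_linear_transpose: "bounded_linear (transpose :: real^'m^'n \<Rightarrow> real^'n^'m)"
  by (auto simp: transpose_add transpose_scalar intro!: linearI linear_conv_bounded_linear[THEN iffD1])

lemmas has_derivative_transpose[derivative_intros] =
  bounded_linear.has_derivative[OF bounded_linear_transpose]

lemma inner_transpose: "transpose (A::real^'p^'n) \<bullet> transpose B = A \<bullet> B"
  by (simp add: inner_vec_def transpose_def) (rule sum.swap)

lemma inner_matrix_mult_left: "(A::real^'p^'n) \<bullet> (B ** C) = (transpose B ** A) \<bullet> C"
proof -
  have "A \<bullet> (B ** C) = (\<Sum>i\<in>UNIV. \<Sum>k\<in>UNIV. \<Sum>j\<in>UNIV. B$i$j * A$i$k * C$j$k)"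
    by (simp add: inner_vec_def matrix_matrix_mult_def sum_distrib_left mult_ac)
  also have "\<dots> = (\<Sum>i\<in>UNIV. \<Sum>j\<in>UNIV. \<Sum>k\<in>UNIV. B$i$j * A$i$k * C$j$k)"
    by (rule sum.cong[OF refl], rule sum.swap)
  also have "\<dots> = (\<Sum>j\<in>UNIV. \<Sum>i\<in>UNIV. \<Sum>k\<in>UNIV. B$i$j * A$i$k * C$j$k)"
    by (rule sum.swap)
  also have "\<dots> = (\<Sum>j\<in>UNIV. \<Sum>k\<in>UNIV. \<Sum>i\<in>UNIV. B$i$j * A$i$k * C$j$k)"
    by (rule sum.cong[OF refl], rule sum.swap)
  also have "\<dots> = (transpose B ** A) \<bullet> C"
    by (simp add: inner_vec_def matrix_matrix_mult_def transpose_def sum_distrib_left mult_ac)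
  finally show ?thesis .
qed

lemma inner_matrix_mult_right: "(A::real^'p^'n) \<bullet> (B ** C) = (A ** transpose C) \<bullet> B"
proof -
  have "A \<bullet> (B ** C) = transpose A \<bullet> (transpose C ** transpose B)"
    by (metis inner_transpose matrix_transpose_mul)
  also have "\<dots> = (A ** transpose C) \<bullet> B"
    by (metis inner_matrix_mult_left inner_transpose matrix_transpose_mul transpose_transpose)
  finally show ?thesis .
qed

lemma Phi_transpose: "Phi (transpose M) = Phi M"
  by (simp add: Phi_def add.commute)

lemma inner_Phi: "Phi A \<bullet> B = A \<bullet> Phi B"
proof -
  have "transpose A \<bullet> B = A \<bullet> transpose B"
    by (metis inner_transpose transpose_transpose)
  then show ?thesis
    by (simp add: Phi_def inner_add_left inner_add_right algebra_simps)
qed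

lemma bounded_linear_Phi: "bounded_linear (Phi :: real^'m^'m \<Rightarrow> real^'m^'m)"
  unfolding Phi_def
  by (auto simp: transpose_add transpose_scalar algebra_simps
      intro!: linearI linear_conv_bounded_linear[THEN iffD1])

lemmas has_derivative_Phi[derivative_intros] =
  bounded_linear.has_derivative[OF bounded_linear_Phi]

lemma matrix_unit_eq_axis: "(\<chi> k l. if k = i \<and> l = j then 1 else 0) = axis i (axis j (1::real))"
  by (simp add: vec_eq_iff axis_def)

lemma has_derivative_grad:
  fixes f :: "real^'p^'n \<Rightarrow> real"
  assumes "f differentiable (at X)"
  shows "(f has_derivative (\<lambda>D. grad f X \<bullet> D)) (at X)"
proof -
  let ?L = "frechet_derivative f (at X)"
  have deriv: "(f has_derivative ?L) (at X)"
    using assms frechet_derivative_works by blast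
  have on_basis: "?L b = grad f X \<bullet> b" if "b \<in> Basis" for b
    using that by (auto simp: Basis_vec_def grad_def inner_axis matrix_unit_eq_axis)
  have "?L = (\<lambda>D. grad f X \<bullet> D)"
    by (rule linear_eq_stdbasis[OF has_derivative_linear[OF deriv]
          bounded_linear_inner_right[THEN bounded_linear.linear] on_basis])
  with deriv show ?thesis by simp
qed

lemma grad_eqI:
  fixes g :: "real^'p^'n \<Rightarrow> real"
  assumes "(g has_derivative (\<lambda>D. G \<bullet> D)) (at X)"
  shows "grad g X = G"
  using frechet_derivative_at[OF assms, symmetric]
  by (simp add: grad_def vec_eq_iff matrix_unit_eq_axis inner_axis)

lemma Phi_symmetric: "transpose M = M \<Longrightarrow> Phi M = M"
  by (simp add: Phi_def scaleR_2[symmetric])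

lemma has_derivative_gram:
  "((\<lambda>Y. transpose Y ** Y) has_derivative (\<lambda>D. 2 *\<^sub>R Phi (transpose Y ** D))) (at Y)"
  by (rule has_derivative_eq_rhs, (rule derivative_intros)+)
     (simp add: Phi_def matrix_transpose_mul add.commute)

lemma has_derivative_gram_minus_id:
  "((\<lambda>Y. transpose Y ** Y - mat 1) has_derivative (\<lambda>D. 2 *\<^sub>R Phi (transpose Y ** D))) (at Y)"
  using has_derivative_diff[OF has_derivative_gram has_derivative_const] by simp

lemma has_derivative_Amap: "(Amap has_derivative (\<lambda>D. - Phi (transpose Y ** D))) (at Y)"
  unfolding Amap_def[abs_def]
  by (rule has_derivative_eq_rhs, (rule derivative_intros has_derivative_gram)+) simp

lemma transpose_Amap: "transpose (Amap Y) = Amap Y"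
  by (simp add: Amap_def transpose_diff transpose_scalar matrix_transpose_mul)

lemma has_derivative_mult_Amap:
  "((\<lambda>Y. Y ** Amap Y) has_derivative (\<lambda>D. D ** Amap Y - Y ** Phi (transpose Y ** D))) (at Y)"
  by (rule has_derivative_eq_rhs, (rule derivative_intros has_derivative_Amap)+)
     (simp add: fun_eq_iff matrix_mult_minus_right)

definition hgrad :: "(real^'p^'n \<Rightarrow> real^'p^'n) \<Rightarrow> real \<Rightarrow> real^'p^'n \<Rightarrow> real^'p^'n" where
  "hgrad G \<beta> Y = G (Y ** Amap Y) ** Amap Y - Y ** Phi (transpose Y ** G (Y ** Amap Y))
    + \<beta> *\<^sub>R (Y ** (transpose Y ** Y - mat 1))"

lemma has_derivative_hfun:
  fixes f :: "real^'p^'n \<Rightarrow> real"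
  assumes "\<forall>X. f differentiable (at X)"
  shows "(hfun f \<beta> has_derivative (\<lambda>D. hgrad (grad f) \<beta> Y \<bullet> D)) (at Y)"
proof -
  let ?G = "grad f (Y ** Amap Y)" and ?M = "transpose Y ** Y - mat 1"
  have hfun_eq: "hfun f \<beta> =
      (\<lambda>Y. f (Y ** Amap Y) + (\<beta>/4) * ((transpose Y ** Y - mat 1) \<bullet> (transpose Y ** Y - mat 1)))"
    by (simp add: fun_eq_iff hfun_def power2_norm_eq_inner)
  have df: "((\<lambda>Y. f (Y ** Amap Y)) has_derivative
      (\<lambda>D. ?G \<bullet> (D ** Amap Y - Y ** Phi (transpose Y ** D)))) (at Y)"
    using has_derivative_compose[OF has_derivative_mult_Amap has_derivative_grad] assms by blast
  have dpen: "((\<lambda>Y. (\<beta>/4) * ((transpose Y ** Y - mat 1) \<bullet> (transpose Y ** Y - mat 1))) has_derivative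
      (\<lambda>D. (\<beta>/4) * (?M \<bullet> (2 *\<^sub>R Phi (transpose Y ** D)) + (2 *\<^sub>R Phi (transpose Y ** D)) \<bullet> ?M))) (at Y)"
    by (intro derivative_intros has_derivative_gram_minus_id)
  have dA: "?G \<bullet> (D ** Amap Y) = (?G ** Amap Y) \<bullet> D" for D
    by (simp add: inner_matrix_mult_right transpose_Amap)
  have dPhi: "?G \<bullet> (Y ** Phi (transpose Y ** D)) = (Y ** Phi (transpose Y ** ?G)) \<bullet> D" for D
  proof -
    have "?G \<bullet> (Y ** Phi (transpose Y ** D)) = Phi (transpose Y ** ?G) \<bullet> (transpose Y ** D)"
      by (simp only: inner_matrix_mult_left inner_Phi[symmetric])
    then show ?thesis
      by (simp only: inner_matrix_mult_left transpose_transpose)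
  qed
  have dpen_eq: "?M \<bullet> Phi (transpose Y ** D) = (Y ** ?M) \<bullet> D" for D
  proof -
    have "transpose ?M = ?M"
      by (simp add: transpose_diff matrix_transpose_mul)
    then have "?M \<bullet> Phi (transpose Y ** D) = ?M \<bullet> (transpose Y ** D)"
      by (simp only: inner_Phi[symmetric] Phi_symmetric)
    then show ?thesis
      by (simp only: inner_matrix_mult_left transpose_transpose)
  qed
  have "?G \<bullet> (D ** Amap Y - Y ** Phi (transpose Y ** D))
      + (\<beta>/4) * (?M \<bullet> (2 *\<^sub>R Phi (transpose Y ** D)) + (2 *\<^sub>R Phi (transpose Y ** D)) \<bullet> ?M)
      = hgrad (grad f) \<beta> Y \<bullet> D" for D
  proof -
    have "(\<beta>/4) * (?M \<bullet> (2 *\<^sub>R Phi (transpose Y ** D)) + (2 *\<^sub>R Phi (transpose Y ** D)) \<bullet> ?M)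
        = \<beta> * ((Y ** ?M) \<bullet> D)"
      using dpen_eq[of D] by (simp add: inner_commute[of "Phi (transpose Y ** D)" ?M])
    then show ?thesis
      by (simp add: inner_diff_right dA dPhi hgrad_def inner_diff_left inner_add_left)
  qed
  then show ?thesis
    unfolding hfun_eq by (intro has_derivative_eq_rhs[OF has_derivative_add[OF df dpen]]) auto
qed

lemma grad_hfun:
  fixes f :: "real^'p^'n \<Rightarrow> real"
  assumes "\<forall>X. f differentiable (at X)"
  shows "grad (hfun f \<beta>) = hgrad (grad f) \<beta>"
  using grad_eqI[OF has_derivative_hfun[OF assms]] by blast

lemma has_derivative_hgrad:
  assumes "(G has_derivative G') (at (Y ** Amap Y))"
  shows "(hgrad G \<beta> has_derivative (\<lambda>D.
      G' (D ** Amap Y - Y ** Phi (transpose Y ** D)) ** Amap Y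
      - G (Y ** Amap Y) ** Phi (transpose Y ** D)
      - D ** Phi (transpose Y ** G (Y ** Amap Y))
      - Y ** Phi (transpose Y ** G' (D ** Amap Y - Y ** Phi (transpose Y ** D))
                  + transpose D ** G (Y ** Amap Y))
      + \<beta> *\<^sub>R (Y ** (2 *\<^sub>R Phi (transpose Y ** D)) + D ** (transpose Y ** Y - mat 1)))) (at Y)"
proof -
  have dG: "((\<lambda>Y. G (Y ** Amap Y)) has_derivative
      (\<lambda>D. G' (D ** Amap Y - Y ** Phi (transpose Y ** D)))) (at Y)"
    using has_derivative_compose[OF has_derivative_mult_Amap assms] .
  note d1 = has_derivative_matrix_mult[OF dG has_derivative_Amap]
  note d2 = has_derivative_matrix_mult[OF has_derivative_ident
      has_derivative_Phi[OF has_derivative_matrix_mult[OF has_derivative_transpose[OF has_derivative_ident] dG]]]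
  note d3 = has_derivative_scaleR_right[OF has_derivative_matrix_mult[OF has_derivative_ident has_derivative_gram_minus_id], of \<beta>]
  show ?thesis
    unfolding hgrad_def[abs_def]
    by (rule has_derivative_eq_rhs[OF has_derivative_add[OF has_derivative_diff[OF d1 d2] d3]])
      (simp add: fun_eq_iff matrix_mult_minus_right)
qed

lemma Amap_stiefel: "X \<in> stiefel \<Longrightarrow> Amap X = mat 1"
  by (simp add: stiefel_def Amap_def scaleR_diff_left[symmetric])

lemma Phi_tangent:
  assumes "D \<in> tangent X"
  shows "Phi (transpose X ** D) = 0"
proof -
  have "Phi (transpose X ** D) = Phi (transpose D ** X)"
    by (metis Phi_transpose matrix_transpose_mul transpose_transpose)
  then show ?thesis
    using assms by (simp add: tangent_def)
qed

lemma inner_tangent_Phi: "D \<in> tangent X \<Longrightarrow> D \<bullet> (X ** Phi Q) = 0"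
  by (simp add: inner_matrix_mult_left inner_Phi[symmetric] Phi_tangent)

lemma hess_hfun_tangent:
  fixes f :: "real^'p^'n \<Rightarrow> real"
  assumes "\<forall>Y. f differentiable (at Y)" and "grad f differentiable (at X)"
    and X: "X \<in> stiefel" and D: "D \<in> tangent X"
  shows "hess (hfun f \<beta>) X D = hess f X D - D ** Phi (transpose X ** grad f X)
           - X ** Phi (transpose X ** hess f X D + transpose D ** grad f X)"
proof -
  have "(grad f has_derivative hess f X) (at (X ** Amap X))"
    using assms(2) X by (simp add: Amap_stiefel hess_def frechet_derivative_works)
  from has_derivative_hgrad[OF this, of \<beta>] show ?thesis
    unfolding hess_def grad_hfun[OF assms(1)]
    using X D by (simp add: frechet_derivative_at[symmetric] Amap_stiefel Phi_tangent stiefel_def)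
qed

theorem mainTheorem10:
  fixes f :: "real^'p^'n \<Rightarrow> real" and \<beta> :: real
  assumes "\<beta> > 0"
    and "\<forall>X. f differentiable (at X)"
    and "loc_lipschitz f"
    and "loc_lipschitz (grad f)"
    and "\<forall>X. grad f differentiable (at X)"
  shows "\<forall>X \<in> stiefel. \<forall>D \<in> tangent X.
           D \<bullet> hess (hfun f \<beta>) X D
           = D \<bullet> (hess f X D - D ** Phi (transpose X ** grad f X))"
proof (intro ballI)
  fix X D :: "real^'p^'n"
  assume X: "X \<in> stiefel" and D: "D \<in> tangent X"
  let ?Q = "transpose X ** hess f X D + transpose D ** grad f X"
  have "hess (hfun f \<beta>) X D = hess f X D - D ** Phi (transpose X ** grad f X) - X ** Phi ?Q"
    using hess_hfun_tangent[OF assms(2) assms(5)[rule_format] X D] .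
  moreover have "D \<bullet> (X ** Phi ?Q) = 0"
    using inner_tangent_Phi[OF D] .
  ultimately show "D \<bullet> hess (hfun f \<beta>) X D = D \<bullet> (hess f X D - D ** Phi (transpose X ** grad f X))"
    by (simp only: inner_diff_right diff_zero)
qed

end
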